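(* Let $G$ be a connected graph on $n\ge 2$ vertices. Then $$\frac{2}{n-1}\le \gamma(G)\le \frac{n}{n-1}.$$ Equality holds in the lower bound if and only if $G$ is isomorphic to the path $P_n$, and equality holds in the upper bound if and only if $G$ is isomorphic to the complete graph $K_n$.
   Context: For a finite simple undirected graph $G$ with $n$ vertices, let $\mathcal{F}=\{x\in\mathbb{R}^{V(G)} : \sum_{v} x_v = 0,\ \|x\|_\infty = 1\}$, for $x\in\mathcal{F}$ let $\gamma_x(G)=\max_{uv\in E(G)}|x_u-x_v|$, and $\gamma(G)=\min_{x\in\mathcal{F}}\gamma_x(G)$. *)

theory Defs
  imports Complex_Main
begin

definition simple_graph :: "'a set \<Rightarrow> ('a \<Rightarrow> 'a \<Rightarrow> bool) \<Rightarrow> bool" where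
  "simple_graph V E \<longleftrightarrow> finite V \<and>
     (\<forall>u v. E u v \<longrightarrow> u \<in> V \<and> v \<in> V) \<and>
     (\<forall>u v. E u v \<longrightarrow> E v u) \<and> (\<forall>u. \<not> E u u)"

definition connected_graph :: "'a set \<Rightarrow> ('a \<Rightarrow> 'a \<Rightarrow> bool) \<Rightarrow> bool" where
  "connected_graph V E \<longleftrightarrow>
     (\<forall>u\<in>V. \<forall>v\<in>V. (\<lambda>a b. a \<in> V \<and> b \<in> V \<and> E a b)\<^sup>*\<^sup>* u v)"

definition edges :: "'a set \<Rightarrow> ('a \<Rightarrow> 'a \<Rightarrow> bool) \<Rightarrow> ('a \<times> 'a) set" where
  "edges V E = {(u, v). u \<in> V \<and> v \<in> V \<and> E u v}"

text \<open>Vectors in R^V are functions vanishing outside V.\<close>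
definition sup_norm :: "'a set \<Rightarrow> ('a \<Rightarrow> real) \<Rightarrow> real" where
  "sup_norm V x = Max ((\<lambda>v. \<bar>x v\<bar>) ` V)"

definition feasible :: "'a set \<Rightarrow> ('a \<Rightarrow> real) set" where
  "feasible V = {x. (\<forall>v. v \<notin> V \<longrightarrow> x v = 0) \<and> (\<Sum>v\<in>V. x v) = 0 \<and> sup_norm V x = 1}"

definition gamma_x :: "'a set \<Rightarrow> ('a \<Rightarrow> 'a \<Rightarrow> bool) \<Rightarrow> ('a \<Rightarrow> real) \<Rightarrow> real" where
  "gamma_x V E x = Max ((\<lambda>(u, v). \<bar>x u - x v\<bar>) ` edges V E)"

text \<open>The paper defines gamma as a minimum; the minimum is attained
  (compactness), so it coincides with the infimum used here.\<close>
definition gamma :: "'a set \<Rightarrow> ('a \<Rightarrow> 'a \<Rightarrow> bool) \<Rightarrow> real" where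
  "gamma V E = Inf (gamma_x V E ` feasible V)"

definition iso_path :: "'a set \<Rightarrow> ('a \<Rightarrow> 'a \<Rightarrow> bool) \<Rightarrow> bool" where
  "iso_path V E \<longleftrightarrow> (\<exists>f. bij_betw f V {0..<card V} \<and>
     (\<forall>u\<in>V. \<forall>v\<in>V. E u v \<longleftrightarrow> (f u + 1 = f v \<or> f v + 1 = f u)))"

definition iso_complete :: "'a set \<Rightarrow> ('a \<Rightarrow> 'a \<Rightarrow> bool) \<Rightarrow> bool" where
  "iso_complete V E \<longleftrightarrow> (\<forall>u\<in>V. \<forall>v\<in>V. E u v \<longleftrightarrow> u \<noteq> v)"

end

theory Submission
  imports Defs
begin

text \<open>
Normalise a feasible x so that x v = 1 for some vertex v, and let d = gamma_x x. Along an edge x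
drops by at most d, so by connectivity the superlevel set {u. 1 - k d \<le> x u} has at least
min n (k + 1) vertices. The least such k, the rank r u of u, therefore satisfies
1 - d r u \<le> x u, and the ranks sum to at most n (n - 1) / 2; summing over V gives
0 \<ge> n - d n (n - 1) / 2, i.e. d \<ge> 2 / (n - 1). If the ranks are not a bijection onto
{0..<n} their sum drops by at least one, which yields a bound above 2 / (n - 1) that is uniform
in x; if they are, ranks differ by at most one along edges and G is the path through the vertices
in rank order, on which x = 2 r / (n - 1) - 1 attains 2 / (n - 1).

For the upper bound, the coordinates other than x v average -1 / (n - 1), so some w has
x w \<le> -1 / (n - 1) and d \<ge> n / (n - 1) as soon as v w is an edge, in particular in K_n.
The vector (1, b, ..., b) with b = -1 / (n - 1) attains n / (n - 1) in every graph, and if v and w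
are not adjacent, (1, b - 1/2, b, ..., b) with b = -1 / (2 (n - 1)) does strictly better.
\<close>

lemma connected_graph_crossing_edge:
  assumes "connected_graph V E" "S \<subseteq> V" "a \<in> S" "b \<in> V" "b \<notin> S"
  obtains p q where "p \<in> S" "q \<in> V - S" "E p q"
proof -
  have "(\<lambda>a b. a \<in> V \<and> b \<in> V \<and> E a b)\<^sup>*\<^sup>* a b"
    using assms unfolding connected_graph_def by blast
  then have "\<exists>p\<in>S. \<exists>q\<in>V - S. E p q"
    using assms(3,5)
  proof (induction rule: rtranclp_induct)
    case (step y z)
    then show ?case by (cases "y \<in> S") blast+
  qed simp
  then show thesis using that by blast
qed

lemma finite_edges: "simple_graph V E \<Longrightarrow> finite (edges V E)"
  unfolding simple_graph_def edges_def
  by (rule finite_subset[of _ "V \<times> V"]) auto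

lemma edges_nonempty:
  assumes "connected_graph V E" "2 \<le> card V"
  shows "edges V E \<noteq> {}"
proof -
  have "finite V" "\<not> card V \<le> Suc 0" using assms(2) card.infinite by fastforce+
  then obtain v w where vw: "v \<in> V" "w \<in> V" "v \<noteq> w"
    using card_le_Suc0_iff_eq by blast
  obtain p q where "p \<in> {v}" "q \<in> V - {v}" "E p q"
    using connected_graph_crossing_edge[OF assms(1), of "{v}" v w] vw by auto
  then show ?thesis using vw by (auto simp: edges_def)
qed

lemma abs_diff_le_gamma_x:
  assumes "simple_graph V E" "u \<in> V" "v \<in> V" "E u v"
  shows "\<bar>x u - x v\<bar> \<le> gamma_x V E x"
  unfolding gamma_x_def using assms finite_edges[OF assms(1)]
  by (intro Max_ge) (force simp: edges_def)+

lemma gamma_x_nonneg: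
  assumes "simple_graph V E" "connected_graph V E" "2 \<le> card V"
  shows "0 \<le> gamma_x V E x"
proof -
  obtain u v where "u \<in> V" "v \<in> V" "E u v"
    using edges_nonempty[OF assms(2,3)] by (auto simp: edges_def)
  then show ?thesis
    using abs_diff_le_gamma_x[OF assms(1)] order_trans[OF abs_ge_zero] by blast
qed

lemma gamma_x_le:
  assumes "simple_graph V E" "connected_graph V E" "2 \<le> card V"
    and "\<And>u v. u \<in> V \<Longrightarrow> v \<in> V \<Longrightarrow> E u v \<Longrightarrow> \<bar>x u - x v\<bar> \<le> c"
  shows "gamma_x V E x \<le> c"
  unfolding gamma_x_def using assms finite_edges[OF assms(1)] edges_nonempty[OF assms(2,3)]
  by (subst Max_le_iff) (auto simp: edges_def)

lemma gamma_x_less: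
  assumes "simple_graph V E" "connected_graph V E" "2 \<le> card V"
    and "\<And>u v. u \<in> V \<Longrightarrow> v \<in> V \<Longrightarrow> E u v \<Longrightarrow> \<bar>x u - x v\<bar> < c"
  shows "gamma_x V E x < c"
  unfolding gamma_x_def using assms finite_edges[OF assms(1)] edges_nonempty[OF assms(2,3)]
  by (subst Max_less_iff) (auto simp: edges_def)

lemma gamma_x_uminus: "gamma_x V E (\<lambda>u. - x u) = gamma_x V E x"
  unfolding gamma_x_def
  by (rule arg_cong[where f = Max], rule image_cong) (auto simp: abs_minus_commute)

lemma feasibleI:
  assumes "finite V" "\<And>u. u \<notin> V \<Longrightarrow> x u = 0" "(\<Sum>u\<in>V. x u) = 0"
    and "v \<in> V" "\<bar>x v\<bar> = 1" "\<And>u. u \<in> V \<Longrightarrow> \<bar>x u\<bar> \<le> 1"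
  shows "x \<in> feasible V"
proof -
  have "sup_norm V x = 1"
    unfolding sup_norm_def using assms by (intro Max_eqI) auto
  then show ?thesis using assms by (simp add: feasible_def)
qed

lemma feasible_uminus: "x \<in> feasible V \<Longrightarrow> (\<lambda>u. - x u) \<in> feasible V"
  unfolding feasible_def sup_norm_def by (simp add: sum_negf)

lemma feasible_norm_attained:
  assumes "x \<in> feasible V" "finite V" "V \<noteq> {}"
  obtains v where "v \<in> V" "\<bar>x v\<bar> = 1"
proof -
  have "sup_norm V x \<in> (\<lambda>v. \<bar>x v\<bar>) ` V"
    unfolding sup_norm_def using assms(2,3) by (intro Max_in) auto
  then show thesis using assms(1) that by (auto simp: feasible_def)
qed

lemma gamma_x_feasible_wlog:
  assumes "x \<in> feasible V" "finite V" "V \<noteq> {}"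
    and "\<And>y v. y \<in> feasible V \<Longrightarrow> v \<in> V \<Longrightarrow> y v = 1 \<Longrightarrow> P (gamma_x V E y)"
  shows "P (gamma_x V E x)"
proof -
  obtain v where v: "v \<in> V" "\<bar>x v\<bar> = 1"
    using feasible_norm_attained[OF assms(1-3)] .
  show ?thesis
  proof (cases "x v = 1")
    case False
    then have "- x v = 1" using v(2) by linarith
    then show ?thesis
      using assms(4)[OF feasible_uminus[OF assms(1)] v(1)] by (simp add: gamma_x_uminus)
  qed (use assms(4)[OF assms(1) v(1)] in simp)
qed

lemma gamma_le_gamma_x:
  assumes "simple_graph V E" "connected_graph V E" "2 \<le> card V" "x \<in> feasible V"
  shows "gamma V E \<le> gamma_x V E x"
  unfolding gamma_def using assms gamma_x_nonneg[OF assms(1-3)]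
  by (intro cInf_lower bdd_belowI[of _ 0]) auto

lemma gamma_greatest:
  assumes "feasible V \<noteq> {}" "\<And>x. x \<in> feasible V \<Longrightarrow> c \<le> gamma_x V E x"
  shows "c \<le> gamma V E"
  unfolding gamma_def using assms by (intro cInf_greatest) auto

lemma sum_rank_plus_sum_card_sublevel:
  fixes r :: "'a \<Rightarrow> nat"
  assumes "finite V" "\<And>u. u \<in> V \<Longrightarrow> r u < n"
  shows "(\<Sum>u\<in>V. r u) + (\<Sum>k<n. card {u\<in>V. r u \<le> k}) = n * card V"
proof -
  have "r u = (\<Sum>k<n. if k < r u then 1 else 0)" if "u \<in> V" for u
  proof -
    have "{k\<in>{..<n}. k < r u} = {..<r u}" using assms(2)[OF that] by auto
    then show ?thesis by (simp flip: sum.inter_filter)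
  qed
  then have "(\<Sum>u\<in>V. r u) = (\<Sum>k<n. \<Sum>u\<in>V. if k < r u then 1 else 0)"
    by (simp add: sum.swap[of _ V])
  moreover have "card {u\<in>V. r u \<le> k} = (\<Sum>u\<in>V. if r u \<le> k then 1 else 0)" for k
    using assms(1) by (simp flip: sum.inter_filter)
  ultimately have "(\<Sum>u\<in>V. r u) + (\<Sum>k<n. card {u\<in>V. r u \<le> k})
      = (\<Sum>k<n. \<Sum>u\<in>V. (if k < r u then 1 else 0) + (if r u \<le> k then 1 else 0))"
    by (simp add: sum.distrib)
  also have "\<dots> = (\<Sum>k<n. \<Sum>u\<in>V. 1)"
    by (intro sum.cong refl) auto
  finally show ?thesis by simp
qed

lemma double_sum_lessThan_Suc: "2 * (\<Sum>k<n. k + 1) = n * (n + 1 :: nat)"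
  by (induction n) (auto simp: algebra_simps)

lemma double_sum_lessThan_of_nat:
  "2 * (\<Sum>k<n. of_nat k) = of_nat n * (of_nat n - 1 :: 'a::comm_ring_1)"
  by (induction n) (auto simp: algebra_simps)

lemma rank_sum_le:
  fixes r :: "'a \<Rightarrow> nat"
  assumes "finite V" "card V = n" "\<And>u. u \<in> V \<Longrightarrow> r u < n"
    and "\<And>k. k < n \<Longrightarrow> k + 1 \<le> card {u\<in>V. r u \<le> k}"
  shows "2 * (\<Sum>u\<in>V. r u) \<le> n * (n - 1)"
proof -
  have "(\<Sum>k<n. k + 1) \<le> (\<Sum>k<n. card {u\<in>V. r u \<le> k})"
    using assms(4) by (intro sum_mono) auto
  then show ?thesis
    using sum_rank_plus_sum_card_sublevel[of V r n] double_sum_lessThan_Suc[of n] assms(1-3)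
    by (cases n) (auto simp: algebra_simps)
qed

lemma rank_sum_le_strict:
  fixes r :: "'a \<Rightarrow> nat"
  assumes "finite V" "card V = n" "\<And>u. u \<in> V \<Longrightarrow> r u < n"
    and "\<And>k. k < n \<Longrightarrow> k + 1 \<le> card {u\<in>V. r u \<le> k}"
    and "\<not> bij_betw r V {0..<n}"
  shows "2 * (\<Sum>u\<in>V. r u) + 2 \<le> n * (n - 1)"
proof -
  have "r ` V \<subseteq> {0..<n}" using assms(3) by auto
  moreover have "r ` V \<noteq> {0..<n}"
    using assms(1,2,5) eq_card_imp_inj_on[of V r] by (auto simp: bij_betw_def)
  ultimately obtain k where k: "k < n" "k \<notin> r ` V" by fastforce
  have "k \<noteq> 0"
  proof
    assume "k = 0"
    then have "{u\<in>V. r u \<le> k} = {}" using k(2) by (auto simp: image_iff)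
    then have "card {u\<in>V. r u \<le> k} = 0" by (simp only: card.empty)
    then show False using assms(4)[OF k(1)] by simp
  qed
  then obtain j where j: "k = Suc j" using not0_implies_Suc by blast
  have "{u\<in>V. r u \<le> k} = {u\<in>V. r u \<le> j}"
    using k(2) j by (auto simp: le_Suc_eq image_iff)
  then have "j + 1 < card {u\<in>V. r u \<le> j}" using assms(4)[OF k(1)] j by simp
  then have "(\<Sum>k<n. k + 1) < (\<Sum>k<n. card {u\<in>V. r u \<le> k})"
    using assms(4) j k(1) by (intro sum_strict_mono_ex1) auto
  then show ?thesis
    using sum_rank_plus_sum_card_sublevel[of V r n] double_sum_lessThan_Suc[of n] assms(1-3)
    by (cases n) (auto simp: algebra_simps)
qed

lemma iso_path_of_rank:
  fixes r :: "'a \<Rightarrow> nat"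
  assumes sg: "simple_graph V E" and conn: "connected_graph V E"
    and bij: "bij_betw r V {0..<card V}"
    and step: "\<And>a b. a \<in> V \<Longrightarrow> b \<in> V \<Longrightarrow> E a b \<Longrightarrow> r b \<le> r a + 1"
  shows "iso_path V E"
proof -
  have inj: "inj_on r V" using bij by (simp add: bij_betw_def)
  have sym: "E a b \<Longrightarrow> E b a" and irrefl: "\<not> E a a" for a b
    using sg by (auto simp: simple_graph_def)
  have adjacent: "E u v" if uv: "u \<in> V" "v \<in> V" "r v = r u + 1" for u v
  proof -
    define S where "S = {w\<in>V. r w \<le> r u}"
    have "S \<subseteq> V" "u \<in> S" "v \<notin> S"
      using uv by (auto simp: S_def)
    then obtain p q where pq: "p \<in> S" "q \<in> V - S" "E p q"
      using connected_graph_crossing_edge[OF conn _ _ uv(2)] by metis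
    then have "r q = r u + 1" "r p = r u"
      using step[of p q] by (auto simp: S_def)
    then have "q = v" "p = u"
      using inj uv pq unfolding S_def inj_on_def by auto
    then show ?thesis using pq by simp
  qed
  have "E u v \<longleftrightarrow> r u + 1 = r v \<or> r v + 1 = r u" if uv: "u \<in> V" "v \<in> V" for u v
  proof
    assume "E u v"
    then have "r u \<noteq> r v" "r v \<le> r u + 1" "r u \<le> r v + 1"
      using inj uv irrefl step sym inj_onD by metis+
    then show "r u + 1 = r v \<or> r v + 1 = r u" by linarith
  next
    assume "r u + 1 = r v \<or> r v + 1 = r u"
    then show "E u v" using adjacent[OF uv] adjacent[OF uv(2,1)] sym by metis
  qed
  then show ?thesis using bij unfolding iso_path_def by blast
qed

lemma card_upper_level_set:
  assumes fin: "finite V" and conn: "connected_graph V E" and d: "0 \<le> d"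
    and slope: "\<And>a b. a \<in> V \<Longrightarrow> b \<in> V \<Longrightarrow> E a b \<Longrightarrow> x a - d \<le> x b"
    and v: "v \<in> V" "x v = 1"
  shows "min (card V) (k + 1) \<le> card {u\<in>V. 1 - real k * d \<le> x u}"
proof -
  define S where "S j = {u\<in>V. 1 - real j * d \<le> x u}" for j
  have S_sub: "S j \<subseteq> V" for j by (auto simp: S_def)
  have S_mono: "S j \<subseteq> S (Suc j)" for j
  proof -
    have "1 - real (Suc j) * d \<le> 1 - real j * d" using d by (simp add: algebra_simps)
    then show ?thesis by (auto simp: S_def)
  qed
  have "v \<in> S j" for j
    using v d by (simp add: S_def)
  have "min (card V) (k + 1) \<le> card (S k)"
  proof (induction k)
    case 0
    have "0 < card (S 0)"
      using \<open>v \<in> S 0\<close> fin S_sub finite_subset by (metis card_gt_0_iff empty_iff)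
    then show ?case by simp
  next
    case (Suc k)
    show ?case
    proof (cases "S k = V")
      case True
      then have "S (Suc k) = V" using S_mono[of k] S_sub[of "Suc k"] by blast
      then show ?thesis by simp
    next
      case False
      then obtain b where "b \<in> V" "b \<notin> S k" using S_sub by blast
      then obtain p q where pq: "p \<in> S k" "q \<in> V - S k" "E p q"
        using connected_graph_crossing_edge[OF conn S_sub \<open>v \<in> S k\<close>] by metis
      then have "x p - d \<le> x q" using slope S_sub by blast
      then have "q \<in> S (Suc k)"
        using pq by (auto simp: S_def algebra_simps)
      then have "insert q (S k) \<subseteq> S (Suc k)" using S_mono by blast
      then have "card (insert q (S k)) \<le> card (S (Suc k))"
        using fin S_sub card_mono finite_subset by metis
      moreover have "card (insert q (S k)) = card (S k) + 1"
        using pq fin S_sub finite_subset by fastforce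
      ultimately show ?thesis using Suc.IH by linarith
    qed
  qed
  then show ?thesis by (simp add: S_def)
qed

lemma level_rank_exists:
  assumes fin: "finite V" and conn: "connected_graph V E" and d: "0 \<le> d"
    and slope: "\<And>a b. a \<in> V \<Longrightarrow> b \<in> V \<Longrightarrow> E a b \<Longrightarrow> x a - d \<le> x b"
    and v: "v \<in> V" "x v = 1"
  obtains r :: "'a \<Rightarrow> nat" where
    "\<And>u. u \<in> V \<Longrightarrow> r u < card V"
    "\<And>k. k < card V \<Longrightarrow> k + 1 \<le> card {u\<in>V. r u \<le> k}"
    "\<And>a b. a \<in> V \<Longrightarrow> b \<in> V \<Longrightarrow> E a b \<Longrightarrow> r b \<le> r a + 1"
    "\<And>u. u \<in> V \<Longrightarrow> 1 - real (r u) * d \<le> x u"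
proof -
  define r where "r u = (LEAST k. 1 - real k * d \<le> x u)" for u
  let ?S = "\<lambda>k. {u\<in>V. 1 - real k * d \<le> x u}"
  have n: "0 < card V" using fin v(1) card_gt_0_iff by blast
  have "card V \<le> card (?S (card V - 1))"
    using card_upper_level_set[where x = x, OF assms, of "card V - 1"] n by simp
  then have "?S (card V - 1) = V"
    using fin by (metis (no_types, lifting) card_seteq mem_Collect_eq subsetI)
  then have top: "1 - real (card V - 1) * d \<le> x u" if "u \<in> V" for u
    using that by blast
  have r_le: "r u \<le> k" if "1 - real k * d \<le> x u" for u k
    unfolding r_def using that by (rule Least_le)
  have r_level: "1 - real (r u) * d \<le> x u" if "u \<in> V" for u
    unfolding r_def using top[OF that] by (rule LeastI)
  have r_less: "r u < card V" if "u \<in> V" for u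
    using r_le[OF top[OF that]] n by linarith
  have "{u\<in>V. r u \<le> k} = ?S k" for k
  proof (intro equalityI subsetI)
    fix u assume "u \<in> {u\<in>V. r u \<le> k}"
    then have "u \<in> V" "real (r u) * d \<le> real k * d"
      using d by (auto intro: mult_right_mono)
    then show "u \<in> ?S k" using r_level by fastforce
  qed (use r_le in auto)
  then have r_card: "k + 1 \<le> card {u\<in>V. r u \<le> k}" if "k < card V" for k
    using card_upper_level_set[where x = x, OF assms, of k] that by simp
  have r_step: "r b \<le> r a + 1" if "a \<in> V" "b \<in> V" "E a b" for a b
  proof (rule r_le)
    show "1 - real (r a + 1) * d \<le> x b"
      using r_level[OF that(1)] slope[OF that] by (simp add: algebra_simps)
  qed
  show thesis
    by (rule that[of r]) (fact r_less r_card r_step r_level)+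
qed

lemma gamma_x_lower_bounds_normalized:
  assumes sg: "simple_graph V E" and conn: "connected_graph V E"
    and n: "card V = n" "2 \<le> n" and x: "x \<in> feasible V" and v: "v \<in> V" "x v = 1"
  shows "2 * real n \<le> gamma_x V E x * (real n * (real n - 1))"
    and "\<not> iso_path V E \<Longrightarrow> 2 * real n \<le> gamma_x V E x * (real n * (real n - 1) - 2)"
proof -
  define d where "d = gamma_x V E x"
  have fin: "finite V" using n card.infinite by fastforce
  have d: "0 \<le> d" unfolding d_def using gamma_x_nonneg[OF sg conn] n by simp
  have slope: "x a - d \<le> x b" if "a \<in> V" "b \<in> V" "E a b" for a b
    using abs_diff_le_gamma_x[OF sg that, of x] unfolding d_def by linarith
  obtain r where r_less: "\<And>u. u \<in> V \<Longrightarrow> r u < card V"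
    and r_card: "\<And>k. k < card V \<Longrightarrow> k + 1 \<le> card {u\<in>V. r u \<le> k}"
    and r_step: "\<And>a b. a \<in> V \<Longrightarrow> b \<in> V \<Longrightarrow> E a b \<Longrightarrow> r b \<le> r a + 1"
    and r_level: "\<And>u. u \<in> V \<Longrightarrow> 1 - real (r u) * d \<le> x u"
    using level_rank_exists[where x = x, OF fin conn d slope v] by blast
  define s where "s = real (\<Sum>u\<in>V. r u)"
  have "(\<Sum>u\<in>V. 1 - real (r u) * d) \<le> (\<Sum>u\<in>V. x u)"
    using r_level by (rule sum_mono)
  also have "\<dots> = 0" using x by (simp add: feasible_def)
  also have "(\<Sum>u\<in>V. 1 - real (r u) * d) = real n - d * s"
    using n(1) by (simp add: s_def sum_subtractf sum_distrib_left mult.commute)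
  finally have n_le: "2 * real n \<le> d * (2 * s)" by simp
  have n_real: "real (n * (n - 1)) = real n * (real n - 1)"
    using n by (simp add: of_nat_diff)
  have "2 * (\<Sum>u\<in>V. r u) \<le> n * (n - 1)"
    using rank_sum_le[OF fin refl r_less r_card] n(1) by simp
  then have "2 * s \<le> real n * (real n - 1)"
    unfolding s_def n_real[symmetric] by linarith
  then show "2 * real n \<le> d * (real n * (real n - 1))"
    using n_le mult_left_mono[OF _ d] order_trans by blast
  assume "\<not> iso_path V E"
  then have "\<not> bij_betw r V {0..<n}"
    using iso_path_of_rank[of V E r, OF sg conn _ r_step] n by blast
  then have "2 * (\<Sum>u\<in>V. r u) + 2 \<le> n * (n - 1)"
    using rank_sum_le_strict[OF fin refl r_less r_card] n(1) by simp
  then have "2 * s \<le> real n * (real n - 1) - 2"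
    unfolding s_def n_real[symmetric] by linarith
  then show "2 * real n \<le> d * (real n * (real n - 1) - 2)"
    using n_le mult_left_mono[OF _ d] order_trans by blast
qed

lemma gamma_x_lower_bounds:
  assumes sg: "simple_graph V E" and conn: "connected_graph V E"
    and n: "card V = n" "2 \<le> n" and x: "x \<in> feasible V"
  shows "2 / (real n - 1) \<le> gamma_x V E x"
    and "\<not> iso_path V E \<Longrightarrow> 2 * real n \<le> gamma_x V E x * (real n * (real n - 1) - 2)"
proof -
  have fin: "finite V" and ne: "V \<noteq> {}" using n card.infinite by fastforce+
  have "2 * real n \<le> gamma_x V E x * (real n * (real n - 1))"
    using gamma_x_feasible_wlog[OF x fin ne] gamma_x_lower_bounds_normalized(1)[OF sg conn n] .
  then have "2 * real n \<le> gamma_x V E x * (real n - 1) * real n"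
    by (simp add: algebra_simps)
  then have "2 \<le> gamma_x V E x * (real n - 1)"
    using n by simp
  then show "2 / (real n - 1) \<le> gamma_x V E x"
    using n by (simp add: divide_le_eq)
  show "\<not> iso_path V E \<Longrightarrow> 2 * real n \<le> gamma_x V E x * (real n * (real n - 1) - 2)"
    using gamma_x_feasible_wlog[OF x fin ne] gamma_x_lower_bounds_normalized(2)[OF sg conn n] .
qed

lemma gamma_x_complete_lower_bound_normalized:
  assumes sg: "simple_graph V E" and complete: "iso_complete V E"
    and n: "card V = n" "2 \<le> n" and x: "x \<in> feasible V" and v: "v \<in> V" "x v = 1"
  shows "real n / (real n - 1) \<le> gamma_x V E x"
proof -
  have fin: "finite V" using n card.infinite by fastforce
  let ?W = "V - {v}"
  have W: "finite ?W" "card ?W = n - 1"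
    using fin v n by (auto simp: card_Diff_singleton)
  then have "?W \<noteq> {}" using n(2) by (intro notI) simp
  have "(\<Sum>u\<in>?W. x u) = -1"
    using sum.remove[OF fin v(1), of x] x v(2) by (simp add: feasible_def)
  then have min: "(real n - 1) * Min (x ` ?W) \<le> -1"
    using sum_bounded_below[of ?W "Min (x ` ?W)" x] W n(2) by (simp add: of_nat_diff)
  have "Min (x ` ?W) \<in> x ` ?W"
    using W \<open>?W \<noteq> {}\<close> by (intro Min_in) auto
  then obtain w where w: "w \<in> ?W" "x w = Min (x ` ?W)" by (metis imageE)
  then have "x w * (real n - 1) \<le> -1"
    using min by (simp add: mult.commute)
  then have "x w \<le> -1 / (real n - 1)"
    using n(2) by (subst pos_le_divide_eq) simp_all
  moreover have "\<bar>x v - x w\<bar> \<le> gamma_x V E x"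
    using abs_diff_le_gamma_x[OF sg v(1)] complete v(1) w(1) unfolding iso_complete_def by blast
  moreover have "real n / (real n - 1) = 1 + 1 / (real n - 1)"
    using n by (simp add: field_simps)
  ultimately show ?thesis using v(2) by linarith
qed

lemma gamma_x_complete_lower_bound:
  assumes "simple_graph V E" "iso_complete V E" "card V = n" "2 \<le> n" "x \<in> feasible V"
  shows "real n / (real n - 1) \<le> gamma_x V E x"
proof -
  have "finite V" "V \<noteq> {}" using assms(3,4) card.infinite by fastforce+
  then show ?thesis
    using gamma_x_feasible_wlog[OF assms(5)] gamma_x_complete_lower_bound_normalized[OF assms(1-4)]
    by blast
qed

lemma exists_feasible_gamma_x_le_star:
  assumes sg: "simple_graph V E" and conn: "connected_graph V E"
    and n: "card V = n" "2 \<le> n"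
  shows "\<exists>x\<in>feasible V. gamma_x V E x \<le> real n / (real n - 1)"
proof -
  have fin: "finite V" using n card.infinite by fastforce
  obtain v where v: "v \<in> V" using n by fastforce
  define b where "b = -1 / (real n - 1)"
  define x where "x u = (if u \<in> V then b + (if u = v then 1 - b else 0) else 0)" for u
  have b: "-1 \<le> b" "b \<le> 0" "1 - b = real n / (real n - 1)"
    using n(2) by (auto simp: b_def field_simps)
  have "x \<in> feasible V"
  proof (rule feasibleI[OF fin _ _ v])
    have "(\<Sum>u\<in>V. x u) = real n * b + (1 - b)"
      using fin v n(1) by (simp add: x_def sum.distrib)
    also have "\<dots> = 0" using n(2) by (simp add: b_def field_simps)
    finally show "(\<Sum>u\<in>V. x u) = 0" .
  qed (use v b in \<open>auto simp: x_def\<close>)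
  moreover have "gamma_x V E x \<le> real n / (real n - 1)"
    using b by (intro gamma_x_le[OF sg conn]) (auto simp: x_def n)
  ultimately show ?thesis by blast
qed

lemma feasible_nonempty:
  assumes "simple_graph V E" "connected_graph V E" "2 \<le> card V"
  shows "feasible V \<noteq> {}"
  using exists_feasible_gamma_x_le_star[OF assms(1,2) refl assms(3)] by blast

lemma exists_feasible_gamma_x_less_non_complete:
  assumes sg: "simple_graph V E" and conn: "connected_graph V E"
    and n: "card V = n" "2 \<le> n" and non_complete: "\<not> iso_complete V E"
  shows "\<exists>x\<in>feasible V. gamma_x V E x < real n / (real n - 1)"
proof -
  have fin: "finite V" using n card.infinite by fastforce
  obtain v w where vw: "v \<in> V" "w \<in> V" "v \<noteq> w" "\<not> E v w" "\<not> E w v"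
    using non_complete sg unfolding iso_complete_def simple_graph_def by blast
  define b where "b = -1 / (2 * (real n - 1))"
  define x where "x u = (if u \<in> V
    then b + (if u = v then 1 - b else 0) - (if u = w then 1 / 2 else 0) else 0)" for u
  have n1: "0 < real n - 1" using n(2) by simp
  have b: "-1 / 2 \<le> b" "b \<le> 0"
    using n(2) by (auto simp: b_def field_simps)
  have "1 - b = (2 * real n - 1) / (2 * (real n - 1))"
    using n1 by (simp add: b_def field_simps)
  also have "\<dots> < 2 * real n / (2 * (real n - 1))"
    using n1 by (intro divide_strict_right_mono) auto
  also have "\<dots> = real n / (real n - 1)"
    by (rule mult_divide_mult_cancel_left) simp
  finally have b_less: "1 - b < real n / (real n - 1)" .
  have "x \<in> feasible V"
  proof (rule feasibleI[OF fin _ _ vw(1)])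
    have "(\<Sum>u\<in>V. x u) = real n * b + (1 - b) - 1 / 2"
      using fin vw n(1) by (simp add: x_def sum.distrib sum_subtractf)
    also have "\<dots> = (real n - 1) * b + 1 / 2" by (simp add: algebra_simps)
    also have "(real n - 1) * b = - 1 / 2" using n1 by (simp add: b_def)
    finally show "(\<Sum>u\<in>V. x u) = 0" by simp
  qed (use vw b in \<open>auto simp: x_def\<close>)
  moreover have "gamma_x V E x < real n / (real n - 1)"
    using vw b b_less n1 by (intro gamma_x_less[OF sg conn]) (auto simp: x_def n field_simps)
  ultimately show ?thesis by blast
qed

lemma exists_feasible_gamma_x_le_path:
  assumes sg: "simple_graph V E" and conn: "connected_graph V E"
    and n: "card V = n" "2 \<le> n" and path: "iso_path V E"
  shows "\<exists>x\<in>feasible V. gamma_x V E x \<le> 2 / (real n - 1)"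
proof -
  have fin: "finite V" using n card.infinite by fastforce
  have n1: "0 < real n - 1" using n(2) by simp
  obtain f where f: "bij_betw f V {0..<n}"
    and adj: "\<And>u v. u \<in> V \<Longrightarrow> v \<in> V \<Longrightarrow> E u v \<Longrightarrow> f u + 1 = f v \<or> f v + 1 = f u"
    using path n(1) unfolding iso_path_def by blast
  define x where "x u = (if u \<in> V then 2 * real (f u) / (real n - 1) - 1 else 0)" for u
  have "0 \<in> f ` V" using bij_betw_imp_surj_on[OF f] n(2) by simp
  then obtain u0 where u0: "u0 \<in> V" "f u0 = 0" by (metis imageE)
  have "x \<in> feasible V"
  proof (rule feasibleI[OF fin _ _ u0(1)])
    have "(\<Sum>u\<in>V. real (f u)) = (\<Sum>k<n. real k)"
      using sum.reindex_bij_betw[OF f, of real] by (simp add: atLeast0LessThan)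
    then have "(\<Sum>u\<in>V. x u) = 2 * (\<Sum>k<n. real k) / (real n - 1) - real n"
      using n(1)
      by (simp add: x_def sum_subtractf sum_divide_distrib[symmetric] sum_distrib_left[symmetric])
    also have "\<dots> = 0"
      using n1 by (simp add: double_sum_lessThan_of_nat)
    finally show "(\<Sum>u\<in>V. x u) = 0" .
    fix u assume "u \<in> V"
    then have "real (f u) \<le> real n - 1" using bij_betw_apply[OF f] by fastforce
    then show "\<bar>x u\<bar> \<le> 1"
      using n1 \<open>u \<in> V\<close> by (simp add: x_def abs_le_iff divide_le_eq)
  qed (simp_all add: x_def u0)
  moreover have "gamma_x V E x \<le> 2 / (real n - 1)"
  proof (rule gamma_x_le[OF sg conn])
    fix u v assume uv: "u \<in> V" "v \<in> V" "E u v"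
    then have "\<bar>real (f u) - real (f v)\<bar> = 1" using adj by fastforce
    then have "\<bar>2 * real (f u) - 2 * real (f v)\<bar> = 2" by linarith
    then show "\<bar>x u - x v\<bar> \<le> 2 / (real n - 1)"
      using uv n1 by (simp add: x_def diff_divide_distrib[symmetric])
  qed (use n in simp)
  ultimately show ?thesis by blast
qed

lemma gamma_lower_bound:
  assumes "simple_graph V E" "connected_graph V E" "card V = n" "2 \<le> n"
  shows "2 / (real n - 1) \<le> gamma V E"
  using feasible_nonempty[OF assms(1,2)] gamma_x_lower_bounds(1)[OF assms] assms(3,4)
  by (intro gamma_greatest) auto

lemma gamma_upper_bound:
  assumes "simple_graph V E" "connected_graph V E" "card V = n" "2 \<le> n"
  shows "gamma V E \<le> real n / (real n - 1)"
  using exists_feasible_gamma_x_le_star[OF assms] gamma_le_gamma_x[OF assms(1,2)] assms(3,4)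
  by fastforce

lemma gamma_eq_lower_bound_iff_iso_path:
  assumes sg: "simple_graph V E" and conn: "connected_graph V E"
    and n: "card V = n" "2 \<le> n"
  shows "gamma V E = 2 / (real n - 1) \<longleftrightarrow> iso_path V E"
proof
  assume "iso_path V E"
  then obtain x where "x \<in> feasible V" "gamma_x V E x \<le> 2 / (real n - 1)"
    using exists_feasible_gamma_x_le_path[OF assms] by blast
  then show "gamma V E = 2 / (real n - 1)"
    using gamma_le_gamma_x[OF sg conn] gamma_lower_bound[OF assms] n by fastforce
next
  assume gamma: "gamma V E = 2 / (real n - 1)"
  show "iso_path V E"
  proof (rule ccontr)
    assume non_path: "\<not> iso_path V E"
    define M where "M = real n * (real n - 1) - 2"
    have bound: "2 * real n \<le> gamma_x V E x * M" if "x \<in> feasible V" for x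
      using gamma_x_lower_bounds(2)[OF assms that non_path] by (simp add: M_def)
    obtain x where x: "x \<in> feasible V" using feasible_nonempty[OF sg conn] n by blast
    have "0 < gamma_x V E x * M" using bound[OF x] n(2) by linarith
    then have "0 < M"
      using gamma_x_nonneg[OF sg conn, of x] n by (auto simp: zero_less_mult_iff)
    then have "2 * real n / M \<le> gamma V E"
      using bound feasible_nonempty[OF sg conn] n
      by (intro gamma_greatest) (simp_all add: pos_divide_le_eq)
    moreover have "2 / (real n - 1) < 2 * real n / M"
      using \<open>0 < M\<close> n(2) by (simp add: M_def field_simps)
    ultimately show False using gamma by simp
  qed
qed

lemma gamma_eq_upper_bound_iff_iso_complete:
  assumes sg: "simple_graph V E" and conn: "connected_graph V E"
    and n: "card V = n" "2 \<le> n"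
  shows "gamma V E = real n / (real n - 1) \<longleftrightarrow> iso_complete V E"
proof
  assume "iso_complete V E"
  then have "real n / (real n - 1) \<le> gamma V E"
    using feasible_nonempty[OF sg conn] n gamma_x_complete_lower_bound[OF sg]
    by (intro gamma_greatest) auto
  then show "gamma V E = real n / (real n - 1)"
    using gamma_upper_bound[OF assms] by simp
next
  assume gamma: "gamma V E = real n / (real n - 1)"
  show "iso_complete V E"
  proof (rule ccontr)
    assume "\<not> iso_complete V E"
    then obtain x where "x \<in> feasible V" "gamma_x V E x < real n / (real n - 1)"
      using exists_feasible_gamma_x_less_non_complete[OF assms] by blast
    then show False using gamma_le_gamma_x[OF sg conn] gamma n by fastforce
  qed
qed

theorem theorem4p7:
  fixes V :: "'a set" and E :: "'a \<Rightarrow> 'a \<Rightarrow> bool" and n :: nat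
  assumes "simple_graph V E" and "connected_graph V E"
    and "n = card V" and "n \<ge> 2"
  shows "2 / (real n - 1) \<le> gamma V E \<and> gamma V E \<le> real n / (real n - 1)
    \<and> (gamma V E = 2 / (real n - 1) \<longleftrightarrow> iso_path V E)
    \<and> (gamma V E = real n / (real n - 1) \<longleftrightarrow> iso_complete V E)"
proof -
  have n: "card V = n" "2 \<le> n" using assms(3,4) by simp_all
  show ?thesis
    using gamma_lower_bound[OF assms(1,2) n] gamma_upper_bound[OF assms(1,2) n]
      gamma_eq_lower_bound_iff_iso_path[OF assms(1,2) n]
      gamma_eq_upper_bound_iff_iso_complete[OF assms(1,2) n]
    by blast
qed

end
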